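(* Let $P\subseteq M_{\mathbb{R}}$ be a $d$-dimensional pseudo-symmetric simplicial reflexive polytope. Then there is a lattice basis of $M$ with respect to which every vertex of $P$ has all coordinates in $\{-1,0,1\}$; i.e. $P$ can be embedded into $[-1,1]^d$ by a unimodular transformation.
   Context: $M\cong\mathbb{Z}^d$, $N$ its dual. $P$ is a $d$-dimensional lattice polytope in $M_{\mathbb{R}}$ with $0$ in its interior and primitive vertices; reflexive means $P^*=\{x\in N_{\mathbb{R}}:\langle x,y\rangle\ge-1\ \forall y\in P\}$ is a lattice polytope; simplicial means each facet is a simplex; pseudo-symmetric means some facet $F$ has $-F$ also a facet. *)

theory Defs
  imports "HOL-Analysis.Analysis"
begin

text \<open>Lattice M = Z^n inside M_R = R^n (dimension n = CARD('n)); N identified with Z^n via the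
standard inner product.\<close>

definition lattice_point :: "real^'n \<Rightarrow> bool" where
  "lattice_point x \<longleftrightarrow> (\<forall>i. x $ i \<in> \<int>)"

definition lattice_polytope :: "(real^'n) set \<Rightarrow> bool" where
  "lattice_polytope P \<longleftrightarrow> (\<exists>V. finite V \<and> (\<forall>v\<in>V. lattice_point v) \<and> P = convex hull V)"

definition primitive_point :: "real^'n \<Rightarrow> bool" where
  "primitive_point v \<longleftrightarrow> lattice_point v \<and> v \<noteq> 0 \<and>
     (\<forall>w (k::int). lattice_point w \<and> v = of_int k *\<^sub>R w \<longrightarrow> \<bar>k\<bar> = 1)"

definition polar_dual :: "(real^'n) set \<Rightarrow> (real^'n) set" where
  "polar_dual P = {x. \<forall>y\<in>P. x \<bullet> y \<ge> -1}"

definition reflexive_polytope :: "(real^'n) set \<Rightarrow> bool" where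
  "reflexive_polytope P \<longleftrightarrow> lattice_polytope P \<and> 0 \<in> interior P \<and>
     (\<forall>v. v extreme_point_of P \<longrightarrow> primitive_point v) \<and>
     lattice_polytope (polar_dual P)"

definition simplicial_polytope :: "(real^'n) set \<Rightarrow> bool" where
  "simplicial_polytope P \<longleftrightarrow> (\<forall>F. F facet_of P \<longrightarrow> (int CARD('n) - 1) simplex F)"

definition pseudo_symmetric :: "(real^'n) set \<Rightarrow> bool" where
  "pseudo_symmetric P \<longleftrightarrow> (\<exists>F. F facet_of P \<and> (uminus ` F) facet_of P)"

definition unimodular :: "real^'n^'n \<Rightarrow> bool" where
  "unimodular U \<longleftrightarrow> (\<forall>i j. U $ i $ j \<in> \<int>) \<and> \<bar>det U\<bar> = 1"

end

theory Submission
  imports Defs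
begin

(*
  Let F and -F be facets of P, let c 1, ..., c n be the vertices of the simplex F and f 1, ..., f n
  the dual basis. F lies on the hyperplane u = -1 for u = -(f 1 + ... + f n), which is a vertex of
  the polar dual and hence a lattice point; as -F lies on -u = -1, the integer u . q vanishes at
  every vertex q other than the +-c j.

  Walking from u along f i one leaves the polar dual at time 1 or 2: the exit point is again a
  vertex of the polar dual, hence a lattice point, its value at c i is the exit time, and -c i is
  tight at time 2. Hence -1 <= f i . q <= 1 at the other vertices q. If f i is not a lattice
  vector, both walks, from u and from -u, exit at time 2, where only +-c vertices are tight (the
  tight vertices span a simplex facet); this forces f i . q = 0 and makes 2 f i a lattice vector.

  So the lattice lies between the span of the lattice vectors f i and the 2 f i on one side and the
  span of all f i on the other; modulo the former it is a binary code containing the all-ones word.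
  Such a code is generated by sign vectors, one per non-lattice f i, and these together with the
  lattice vectors f i form the rows of a unimodular matrix mapping every vertex into {-1, 0, 1}^n.
*)

section \<open>Integer submodules generated by sign vectors\<close>

definition int_submodule :: "('a \<Rightarrow> int) set \<Rightarrow> bool" where
  "int_submodule G \<longleftrightarrow> (\<lambda>_. 0) \<in> G \<and> (\<forall>a\<in>G. \<forall>b\<in>G. (\<lambda>j. a j + b j) \<in> G) \<and>
     (\<forall>a\<in>G. \<forall>m. (\<lambda>j. m * a j) \<in> G)"

definition int_span :: "('a \<Rightarrow> 'b \<Rightarrow> int) \<Rightarrow> 'a set \<Rightarrow> ('b \<Rightarrow> int) set" where
  "int_span r J = {h. \<exists>\<beta>. h = (\<lambda>j. \<Sum>k\<in>J. \<beta> k * r k j)}"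

definition double_unit :: "'a \<Rightarrow> 'a \<Rightarrow> int" where
  "double_unit k j = (if j = k then 2 else 0)"

text \<open>The alternative \<open>v = double_unit k\<close> is needed for the induction below, which passes to
  subgroups in which a coordinate may be even throughout.\<close>

definition admissible_generator :: "('a \<Rightarrow> int) set \<Rightarrow> 'a \<Rightarrow> ('a \<Rightarrow> int) \<Rightarrow> bool" where
  "admissible_generator G k v \<longleftrightarrow>
     v \<in> G \<and> ((\<forall>j. v j \<in> {-1, 0, 1}) \<or> v = double_unit k \<and> (\<forall>g\<in>G. even (g k)))"

definition sign_generators :: "('a \<Rightarrow> int) set \<Rightarrow> 'a set \<Rightarrow> ('a \<Rightarrow> 'a \<Rightarrow> int) \<Rightarrow> bool" where
  "sign_generators G J r \<longleftrightarrow> G \<subseteq> int_span r J \<and> (\<forall>k\<in>J. admissible_generator G k (r k))"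

lemma int_submodule_scale:
  assumes "int_submodule G" "a \<in> G"
  shows "(\<lambda>j. m * a j) \<in> G"
  using assms unfolding int_submodule_def by blast

lemma int_submodule_lincomb:
  assumes "int_submodule G" "a \<in> G" "b \<in> G"
  shows "(\<lambda>j. a j + m * b j) \<in> G"
proof -
  have "\<forall>a\<in>G. \<forall>b\<in>G. (\<lambda>j. a j + b j) \<in> G" using assms(1) unfolding int_submodule_def by blast
  from this[rule_format, OF assms(2) int_submodule_scale[OF assms(1,3)]] show ?thesis by simp
qed

lemma int_submodule_sum:
  assumes "int_submodule G" "finite S" "\<forall>k\<in>S. v k \<in> G"
  shows "(\<lambda>j. \<Sum>k\<in>S. v k j) \<in> G"
  using assms(2,3)
proof (induction S rule: finite_induct)
  case empty
  then show ?case using assms(1) unfolding int_submodule_def by simp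
next
  case (insert x S)
  then show ?case using int_submodule_lincomb[OF assms(1), of "v x" _ 1] by simp
qed

lemma int_submodule_coordinate_zero:
  assumes "int_submodule G"
  shows "int_submodule {g\<in>G. g j0 = 0}"
  using assms unfolding int_submodule_def by auto

lemma int_submodule_mod_2:
  assumes G: "int_submodule G" and "finite J" and supp: "\<forall>g\<in>G. \<forall>j. j \<notin> J \<longrightarrow> g j = 0"
    and du: "\<forall>k\<in>J. double_unit k \<in> G" and g: "g \<in> G"
  shows "(\<lambda>j. g j mod 2) \<in> G"
proof -
  have "(\<lambda>j. \<Sum>k\<in>J. (- (g k div 2)) * double_unit k j) \<in> G"
    using du by (intro int_submodule_sum[OF G \<open>finite J\<close>] ballI int_submodule_scale[OF G]) auto
  from int_submodule_lincomb[OF G g this, of 1]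
  have "(\<lambda>j. g j + (\<Sum>k\<in>J. (- (g k div 2)) * double_unit k j)) \<in> G" by simp
  moreover have "g j + (\<Sum>k\<in>J. (- (g k div 2)) * double_unit k j) = g j mod 2" for j
    using supp g \<open>finite J\<close>
    by (cases "j \<in> J") (auto simp: double_unit_def if_distrib minus_div_mult_eq_mod [symmetric] cong: if_cong)
  ultimately show ?thesis by simp
qed

lemma int_span_insert:
  assumes "finite J" "j0 \<notin> J" "(\<lambda>j. h j - m * v j) \<in> int_span r J"
  shows "h \<in> int_span (r(j0 := v)) (insert j0 J)"
proof -
  obtain \<beta> where \<beta>: "\<And>j. h j - m * v j = (\<Sum>k\<in>J. \<beta> k * r k j)"
    using assms(3) unfolding int_span_def by (auto simp: fun_eq_iff)
  have "h j = (\<Sum>k\<in>insert j0 J. (\<beta>(j0 := m)) k * (r(j0 := v)) k j)" for j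
  proof -
    have "(\<Sum>k\<in>J. (\<beta>(j0 := m)) k * (r(j0 := v)) k j) = (\<Sum>k\<in>J. \<beta> k * r k j)"
      using assms(2) by (intro sum.cong) auto
    then show ?thesis using assms(1,2) \<beta>[of j] by simp
  qed
  then show ?thesis unfolding int_span_def by blast
qed

text \<open>Replacing generators \<open>r k\<close> by \<open>r j0 - r k\<close> is a unimodular change of generators.\<close>

lemma int_span_flip:
  assumes "finite J" "j0 \<notin> J" "R \<subseteq> J"
  shows "int_span r (insert j0 J) \<subseteq>
    int_span (\<lambda>k. if k \<in> R then (\<lambda>j. r j0 j - r k j) else r k) (insert j0 J)"
    (is "_ \<subseteq> int_span ?r' _")
proof
  fix h assume "h \<in> int_span r (insert j0 J)"
  then obtain \<beta> where \<beta>: "\<And>j. h j = (\<Sum>k\<in>insert j0 J. \<beta> k * r k j)"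
    unfolding int_span_def by (auto simp: fun_eq_iff)
  define \<beta>' where "\<beta>' k = (if k = j0 then \<beta> j0 + (\<Sum>k\<in>R. \<beta> k) else if k \<in> R then - \<beta> k else \<beta> k)" for k
  have "h j = (\<Sum>k\<in>insert j0 J. \<beta>' k * ?r' k j)" for j
  proof -
    have "(\<Sum>k\<in>J. \<beta>' k * ?r' k j) = (\<Sum>k\<in>J. \<beta> k * r k j - (if k \<in> R then \<beta> k * r j0 j else 0))"
      using assms(2) unfolding \<beta>'_def by (intro sum.cong) (auto simp: algebra_simps)
    also have "\<dots> = (\<Sum>k\<in>J. \<beta> k * r k j) - (\<Sum>k\<in>R. \<beta> k) * r j0 j"
      using assms(1,3) by (simp add: sum_subtractf sum.If_cases Int_absorb1 sum_distrib_right)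
    finally show ?thesis using assms(1,2) \<beta>[of j] assms(3) by (auto simp: \<beta>'_def algebra_simps)
  qed
  then show "h \<in> int_span ?r' (insert j0 J)" unfolding int_span_def by blast
qed

lemma sign_generators_insert_even:
  assumes G: "int_submodule G" and "finite J" "j0 \<notin> J" and du: "double_unit j0 \<in> G"
    and even: "\<forall>g\<in>G. even (g j0)" and r: "sign_generators {g\<in>G. g j0 = 0} J r"
  shows "sign_generators G (insert j0 J) (r(j0 := double_unit j0))"
proof -
  define red where "red g = (\<lambda>j. g j - (g j0 div 2) * double_unit j0 j)" for g
  have red: "red g \<in> {g\<in>G. g j0 = 0}" "\<And>j. j \<noteq> j0 \<Longrightarrow> red g j = g j" if "g \<in> G" for g
    using int_submodule_lincomb[OF G that du, of "- (g j0 div 2)"] even that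
    by (auto simp: red_def double_unit_def)
  have "G \<subseteq> int_span (r(j0 := double_unit j0)) (insert j0 J)"
  proof
    fix h assume "h \<in> G"
    then have "red h \<in> int_span r J" using red(1) r unfolding sign_generators_def by blast
    then show "h \<in> int_span (r(j0 := double_unit j0)) (insert j0 J)"
      unfolding red_def by (rule int_span_insert[OF \<open>finite J\<close> \<open>j0 \<notin> J\<close>])
  qed
  moreover have "admissible_generator G k (r k)" if "k \<in> J" for k
  proof -
    have "admissible_generator {g\<in>G. g j0 = 0} k (r k)" using r that unfolding sign_generators_def by blast
    moreover have "even (g k)" if "g \<in> G" "\<forall>g\<in>{g\<in>G. g j0 = 0}. even (g k)" for g
    proof -
      have "k \<noteq> j0" using \<open>k \<in> J\<close> \<open>j0 \<notin> J\<close> by blast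
      then have "red g k = g k" by (rule red(2)[OF that(1)])
      moreover have "even (red g k)" using red(1)[OF that(1)] that(2) by blast
      ultimately show ?thesis by simp
    qed
    ultimately show ?thesis unfolding admissible_generator_def by blast
  qed
  moreover have "admissible_generator G j0 (double_unit j0)"
    using du even unfolding admissible_generator_def by blast
  ultimately show ?thesis using \<open>j0 \<notin> J\<close> unfolding sign_generators_def by auto
qed

text \<open>For \<open>k \<in> R\<close> the generator \<open>2 e\<^sub>k\<close> of the smaller group is no longer admissible, since
  \<open>\<rho> k\<close> is odd; it is traded for the sign vector \<open>\<rho> - 2 e\<^sub>k\<close>.\<close>

lemma sign_generators_insert_odd:
  assumes G: "int_submodule G" and "finite J" "j0 \<notin> J" and du: "\<forall>k\<in>J. double_unit k \<in> G"
    and \<rho>: "\<rho> \<in> G" "\<rho> j0 = 1" "\<forall>j. \<rho> j \<in> {0, 1}"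
    and r: "sign_generators {g\<in>G. g j0 = 0} J r"
  shows "\<exists>r'. sign_generators G (insert j0 J) r'"
proof -
  define R where "R = {k\<in>J. r k = double_unit k \<and> \<rho> k = 1}"
  let ?r = "r(j0 := \<rho>)"
  define r' where "r' k = (if k \<in> R then (\<lambda>j. ?r j0 j - ?r k j) else ?r k)" for k
  have proj: "(\<lambda>j. h j - h j0 * \<rho> j) \<in> {g\<in>G. g j0 = 0}" if "h \<in> G" for h
    using int_submodule_lincomb[OF G that \<rho>(1), of "- h j0"] \<rho>(2) by simp
  have "G \<subseteq> int_span ?r (insert j0 J)"
  proof
    fix h assume "h \<in> G"
    then have "(\<lambda>j. h j - h j0 * \<rho> j) \<in> int_span r J" using proj r unfolding sign_generators_def by blast
    then show "h \<in> int_span ?r (insert j0 J)" by (rule int_span_insert[OF \<open>finite J\<close> \<open>j0 \<notin> J\<close>])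
  qed
  also have "\<dots> \<subseteq> int_span r' (insert j0 J)"
    unfolding r'_def using \<open>finite J\<close> \<open>j0 \<notin> J\<close> by (intro int_span_flip) (auto simp: R_def)
  finally have span: "G \<subseteq> int_span r' (insert j0 J)" .
  have "admissible_generator G k (r' k)" if k: "k \<in> insert j0 J" for k
  proof -
    consider "k = j0" | "k \<in> R" | "k \<in> J" "k \<notin> R" using k R_def by blast
    then show ?thesis
    proof cases
      case 1
      then show ?thesis using \<rho> \<open>j0 \<notin> J\<close> by (auto simp: r'_def R_def admissible_generator_def)
    next
      case 2
      then have "k \<in> J" "k \<noteq> j0" "r k = double_unit k" "\<rho> k = 1" using \<open>j0 \<notin> J\<close> unfolding R_def by auto
      moreover have "(\<lambda>j. \<rho> j + (-1) * double_unit k j) \<in> G"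
        using int_submodule_lincomb[OF G \<rho>(1)] du \<open>k \<in> J\<close> by blast
      moreover have "\<rho> j + (-1) * double_unit k j \<in> {-1, 0, 1}" for j
        using \<rho>(3) \<open>\<rho> k = 1\<close> by (auto simp: double_unit_def)
      ultimately show ?thesis using 2 by (simp add: r'_def admissible_generator_def)
    next
      case 3
      then have "r' k = r k" "admissible_generator {g\<in>G. g j0 = 0} k (r k)" "k \<noteq> j0"
        using r \<open>j0 \<notin> J\<close> unfolding r'_def sign_generators_def by auto
      moreover have "even (g k)"
        if "g \<in> G" "r k = double_unit k" "\<forall>g\<in>{g\<in>G. g j0 = 0}. even (g k)" for g
      proof -
        have "\<rho> k = 0" using 3 that(2) \<rho>(3) unfolding R_def by auto
        moreover have "even (g k - g j0 * \<rho> k)" using bspec[OF that(3) proj[OF that(1)]] by simp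
        ultimately show ?thesis by simp
      qed
      ultimately show ?thesis unfolding admissible_generator_def by auto
    qed
  qed
  then show ?thesis using span unfolding sign_generators_def by blast
qed

lemma int_submodule_sign_generators:
  assumes "finite J" "int_submodule G" "\<forall>g\<in>G. \<forall>j. j \<notin> J \<longrightarrow> g j = 0"
    "\<forall>k\<in>J. double_unit k \<in> G"
  shows "\<exists>r. sign_generators G J r"
  using assms
proof (induction J arbitrary: G rule: finite_induct)
  case empty
  then have "G \<subseteq> int_span r {}" for r :: "'a \<Rightarrow> 'a \<Rightarrow> int" by (auto simp: int_span_def)
  then show ?case unfolding sign_generators_def by blast
next
  case (insert j0 J G)
  have G: "int_submodule G" and supp: "\<forall>g\<in>G. \<forall>j. j \<notin> insert j0 J \<longrightarrow> g j = 0"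
    and du0: "double_unit j0 \<in> G" and du: "\<forall>k\<in>J. double_unit k \<in> G"
    using insert.prems by auto
  have "\<forall>g\<in>{g\<in>G. g j0 = 0}. \<forall>j. j \<notin> J \<longrightarrow> g j = 0" using supp by auto
  moreover have "\<forall>k\<in>J. double_unit k \<in> {g\<in>G. g j0 = 0}"
    using du insert.hyps(2) by (auto simp: double_unit_def[of _ j0])
  ultimately have "\<exists>r. sign_generators {g\<in>G. g j0 = 0} J r"
    using insert.IH int_submodule_coordinate_zero[OF G] by blast
  then obtain r where r: "sign_generators {g\<in>G. g j0 = 0} J r" by blast
  show ?case
  proof (cases "\<forall>g\<in>G. even (g j0)")
    case True
    show ?thesis using sign_generators_insert_even[OF G insert.hyps du0 True r] by blast
  next
    case False
    then obtain g where g: "g \<in> G" "odd (g j0)" by blast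
    have "\<forall>k\<in>insert j0 J. double_unit k \<in> G" using du0 du by blast
    with insert.hyps(1) have \<rho>: "(\<lambda>j. g j mod 2) \<in> G"
      by (intro int_submodule_mod_2[OF G _ supp _ g(1)]) simp_all
    have \<rho>_j0: "g j0 mod 2 = 1" using g(2) by (simp add: odd_iff_mod_2_eq_one)
    have \<rho>_01: "\<forall>j. g j mod 2 \<in> {0, 1}" by (simp add: mod2_eq_if)
    show ?thesis by (rule sign_generators_insert_odd[OF G insert.hyps du \<rho> \<rho>_j0 \<rho>_01 r])
  qed
qed

lemma int_submodule_sign_vector_generators:
  assumes "finite J" "int_submodule G" "\<forall>g\<in>G. \<forall>j. j \<notin> J \<longrightarrow> g j = 0"
    "\<forall>k\<in>J. double_unit k \<in> G" and odd: "\<forall>k\<in>J. \<exists>g\<in>G. odd (g k)"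
  obtains r where "\<forall>k\<in>J. r k \<in> G \<and> (\<forall>j. r k j \<in> {-1, 0, 1})" "G \<subseteq> int_span r J"
proof -
  obtain r where r: "sign_generators G J r" using int_submodule_sign_generators[OF assms(1-4)] by blast
  have "r k \<in> G \<and> (\<forall>j. r k j \<in> {-1, 0, 1})" if "k \<in> J" for k
    using r that odd unfolding sign_generators_def admissible_generator_def by blast
  moreover have "G \<subseteq> int_span r J" using r unfolding sign_generators_def by blast
  ultimately show ?thesis using that by blast
qed

section \<open>Lattice points, polar duals and simplicial polytopes\<close>

lemma lattice_point_zero [simp]: "lattice_point 0"
  unfolding lattice_point_def by simp

lemma lattice_point_add: "lattice_point x \<Longrightarrow> lattice_point y \<Longrightarrow> lattice_point (x + y)"
  unfolding lattice_point_def by auto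

lemma lattice_point_diff: "lattice_point x \<Longrightarrow> lattice_point y \<Longrightarrow> lattice_point (x - y)"
  unfolding lattice_point_def by auto

lemma lattice_point_uminus: "lattice_point (- x) \<longleftrightarrow> lattice_point x"
  unfolding lattice_point_def by (metis Ints_minus minus_minus vector_uminus_component)

lemma lattice_point_scaleR_of_int: "lattice_point x \<Longrightarrow> lattice_point (of_int k *\<^sub>R x)"
  unfolding lattice_point_def by auto

lemma lattice_point_sum: "(\<And>k. k \<in> S \<Longrightarrow> lattice_point (v k)) \<Longrightarrow> lattice_point (\<Sum>k\<in>S. v k)"
  unfolding lattice_point_def by auto

lemma lattice_point_inner_Ints: "lattice_point x \<Longrightarrow> lattice_point y \<Longrightarrow> x \<bullet> y \<in> \<int>"
  unfolding lattice_point_def inner_vec_def by auto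

lemma lattice_polytope_extreme_point:
  assumes "lattice_polytope Q" "q extreme_point_of Q"
  shows "lattice_point q"
  using assms extreme_point_of_convex_hull unfolding lattice_polytope_def by metis

lemma reflexive_polytope_imp_polytope: "reflexive_polytope P \<Longrightarrow> polytope P"
  unfolding reflexive_polytope_def lattice_polytope_def polytope_def by blast

lemma polytope_vertices:
  fixes P :: "'a::euclidean_space set"
  assumes "polytope P"
  shows "finite {v. v extreme_point_of P}" "P = convex hull {v. v extreme_point_of P}"
  using assms finite_polyhedron_extreme_points polytope_imp_polyhedron
    Krein_Milman_Minkowski polytope_imp_compact polytope_imp_convex by blast+

lemma polar_dual_convex_hull: "polar_dual (convex hull E) = {g. \<forall>y\<in>E. g \<bullet> y \<ge> -1}"
proof (intro equalityI subsetI)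
  fix g assume "g \<in> {g. \<forall>y\<in>E. g \<bullet> y \<ge> -1}"
  then have "convex hull E \<subseteq> {y. g \<bullet> y \<ge> -1}"
    by (intro hull_minimal convex_halfspace_ge) auto
  then show "g \<in> polar_dual (convex hull E)" unfolding polar_dual_def by auto
qed (use hull_subset[of E convex] in \<open>auto simp: polar_dual_def\<close>)

lemma extreme_point_of_face_convex_hull:
  assumes "F face_of P" "F = convex hull S" "y extreme_point_of P" "y \<in> F"
  shows "y \<in> S"
  using assms extreme_point_of_face extreme_point_of_convex_hull by metis

text \<open>A segment of the polar dual through \<open>w\<close> stays tight on the family \<open>s\<close>, so its direction
  is orthogonal to all \<open>s j\<close>.\<close>

lemma extreme_point_of_polar_dual:
  fixes w :: "real^'n" and s :: "'i \<Rightarrow> real^'n"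
  assumes w: "w \<in> polar_dual P" and s: "\<And>j. s j \<in> P" "\<And>j. w \<bullet> s j = -1"
    and spanning: "\<And>g. (\<And>j. g \<bullet> s j = 0) \<Longrightarrow> g = 0"
  shows "w extreme_point_of polar_dual P"
  unfolding extreme_point_of_def
proof (intro conjI ballI notI)
  show "w \<in> polar_dual P" by fact
  fix a b assume a: "a \<in> polar_dual P" and b: "b \<in> polar_dual P" and "w \<in> open_segment a b"
  then obtain t where ab: "a \<noteq> b" and t: "0 < t" "t < 1" and w: "w = (1 - t) *\<^sub>R a + t *\<^sub>R b"
    by (auto simp: in_segment)
  have "a \<bullet> s j = -1 \<and> b \<bullet> s j = -1" for j
  proof -
    have "a \<bullet> s j \<ge> -1" "b \<bullet> s j \<ge> -1" using a b s(1) unfolding polar_dual_def by auto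
    moreover have "(1 - t) * (a \<bullet> s j + 1) + t * (b \<bullet> s j + 1) = 0"
      using s(2)[of j] by (simp add: w algebra_simps)
    moreover have "(1 - t) * (a \<bullet> s j + 1) \<ge> 0" "t * (b \<bullet> s j + 1) \<ge> 0"
      using t calculation(1,2) by simp_all
    ultimately have "(1 - t) * (a \<bullet> s j + 1) = 0" "t * (b \<bullet> s j + 1) = 0" by linarith+
    then show ?thesis using t by simp
  qed
  then have "a - b = 0" by (intro spanning) (simp add: inner_diff_left)
  then show False using ab by simp
qed

lemma facet_of_polytope_normal:
  fixes P F :: "(real^'n) set"
  assumes "polytope P" "0 \<in> interior P" "F facet_of P"
  obtains u where "u \<in> polar_dual P" "F = P \<inter> {y. u \<bullet> y = -1}"
proof -
  have "F face_of P" using assms(3) by (rule facet_of_imp_face_of)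
  then have "F exposed_face_of P"
    using exposed_face_of_polyhedron[OF polytope_imp_polyhedron[OF assms(1)]] by auto
  then obtain a b where ab: "P \<subseteq> {x. a \<bullet> x \<le> b}" "F = P \<inter> {x. a \<bullet> x = b}"
    unfolding exposed_face_of_def by auto
  have "b > 0"
  proof -
    obtain e where e: "e > 0" "ball 0 e \<subseteq> P" using assms(2) mem_interior by blast
    have "a \<noteq> 0"
    proof
      assume "a = 0"
      then have "F = P \<or> F = {}" using ab by auto
      then show False using assms(3) unfolding facet_of_def by auto
    qed
    define y where "y = (e / 2 / norm a) *\<^sub>R a"
    have "y \<in> P" using e \<open>a \<noteq> 0\<close> by (auto simp: y_def)
    then have "a \<bullet> y \<le> b" using ab by auto
    moreover have "a \<bullet> y = e / 2 * norm a"
      unfolding y_def using \<open>a \<noteq> 0\<close> by (simp add: power2_norm_eq_inner[symmetric] power2_eq_square)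
    moreover have "e / 2 * norm a > 0" using e \<open>a \<noteq> 0\<close> by simp
    ultimately show ?thesis by linarith
  qed
  show ?thesis
  proof
    show "(- 1 / b) *\<^sub>R a \<in> polar_dual P"
      using ab(1) \<open>b > 0\<close> unfolding polar_dual_def by (auto simp: field_simps)
    show "F = P \<inter> {y. (- 1 / b) *\<^sub>R a \<bullet> y = -1}"
      unfolding ab(2) using \<open>b > 0\<close> by (auto simp: field_simps)
  qed
qed

lemma biorthogonal_affine_independent:
  fixes s h :: "'i \<Rightarrow> 'a::real_inner"
  assumes hs: "\<And>i j. h i \<bullet> s j = (if i = j then 1 else 0)"
  shows "\<not> affine_dependent (range s)" and "inj s"
proof -
  show inj: "inj s"
    by (rule injI) (metis hs zero_neq_one)
  show "\<not> affine_dependent (range s)"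
  proof
    assume "affine_dependent (range s)"
    then obtain S U where S: "finite S" "S \<subseteq> range s" "\<exists>v\<in>S. U v \<noteq> 0"
      "(\<Sum>v\<in>S. U v *\<^sub>R v) = 0"
      unfolding affine_dependent_explicit by blast
    then obtain i where i: "s i \<in> S" "U (s i) \<noteq> 0" by blast
    have "h i \<bullet> (\<Sum>v\<in>S. U v *\<^sub>R v) = (\<Sum>v\<in>S. if v = s i then U v else 0)"
      unfolding inner_sum_right
      by (rule sum.cong) (use S(2) hs inj in \<open>auto simp: inj_eq\<close>)
    also have "\<dots> = U (s i)" using S(1) i(1) by simp
    finally show False using S(4) i(2) by simp
  qed
qed

text \<open>The points of \<open>P\<close> on which \<open>w\<close> is tight form a face; containing \<open>n\<close> affinely independent
  vertices, it is a facet, hence a simplex whose vertices are exactly those of \<open>S\<close>.\<close>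

lemma simplicial_tight_vertex:
  fixes P :: "(real^'n) set"
  assumes P: "polytope P" "0 \<in> interior P" "simplicial_polytope P" and w: "w \<in> polar_dual P"
    and S: "\<forall>x\<in>S. x extreme_point_of P \<and> w \<bullet> x = -1" "\<not> affine_dependent S" "card S = CARD('n)"
    and q: "q extreme_point_of P" "w \<bullet> q = -1"
  shows "q \<in> S"
proof -
  define G where "G = P \<inter> {x. w \<bullet> x = -1}"
  have face: "G face_of P" unfolding G_def
    using w polytope_imp_convex[OF P(1)]
    by (intro face_of_Int_supporting_hyperplane_ge) (auto simp: polar_dual_def)
  have SG: "S \<subseteq> G" using S(1) unfolding G_def extreme_point_of_def by auto
  have "aff_dim S = int CARD('n) - 1" using aff_dim_affine_independent[OF S(2)] S(3) by simp
  moreover have "aff_dim S \<le> aff_dim G" using SG by (rule aff_dim_subset)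
  moreover have "aff_dim P = int CARD('n)" using aff_dim_nonempty_interior[of P] P(2) by auto
  moreover have "G \<noteq> P"
  proof
    assume "G = P"
    then have "0 \<in> G" using P(2) interior_subset by blast
    then show False by (simp add: G_def)
  qed
  then have "aff_dim G < aff_dim P" using face_of_aff_dim_lt[OF polytope_imp_convex[OF P(1)] face] by simp
  ultimately have "aff_dim G = aff_dim P - 1" by simp
  moreover have "G \<noteq> {}" using SG S(3) by auto
  ultimately have "G facet_of P" using face unfolding facet_of_def by auto
  then obtain C where "finite C" "\<not> affine_dependent C" "int (card C) = int CARD('n) - 1 + 1"
    "G = convex hull C"
    using P(3) unfolding simplicial_polytope_def simplex by blast
  then have C: "finite C" "\<not> affine_dependent C" "card C = CARD('n)" "G = convex hull C" by simp_all
  have "S \<subseteq> C" using SG S(1) extreme_point_of_face_convex_hull[OF face C(4)] by blast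
  then have "S = C" using C(1,3) S(3) card_subset_eq by metis
  have "q \<in> G" using q unfolding G_def extreme_point_of_def by auto
  then have "q \<in> C" by (rule extreme_point_of_face_convex_hull[OF face C(4) q(1)])
  with \<open>S = C\<close> show ?thesis by blast
qed

lemma extreme_point_of_face_simplex:
  fixes S :: "'a::euclidean_space set"
  assumes "F face_of P" "F = convex hull S" "\<not> affine_dependent S" "x \<in> S"
  shows "x extreme_point_of P"
proof -
  have "x extreme_point_of F"
    unfolding assms(2) using extreme_point_of_convex_hull_affine_independent[OF assms(3)] assms(4) by simp
  then show ?thesis using extreme_point_of_face[OF assms(1)] by simp
qed

lemma independent_if_affine_independent_on_hyperplane:
  fixes c :: "'i::finite \<Rightarrow> 'a::real_inner"
  assumes "\<not> affine_dependent (range c)" "inj c" "\<And>j. u \<bullet> c j = -1"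
    and x: "(\<Sum>i\<in>UNIV. x i *\<^sub>R c i) = 0"
  shows "x = (\<lambda>_. 0)"
proof (rule ccontr)
  assume "x \<noteq> (\<lambda>_. 0)"
  then obtain i where "x i \<noteq> 0" by auto
  have "u \<bullet> (\<Sum>i\<in>UNIV. x i *\<^sub>R c i) = - (\<Sum>i\<in>UNIV. x i)"
    by (simp add: inner_sum_right assms(3) sum_negf)
  then have "(\<Sum>i\<in>UNIV. x i) = 0" using x by simp
  define U where "U v = x (inv c v)" for v
  have Uc: "U (c j) = x j" for j unfolding U_def using assms(2) by simp
  have "affine_dependent (range c)"
    unfolding affine_dependent_explicit
  proof (intro exI conjI)
    show "finite (range c)" "range c \<subseteq> range c" by simp_all
    show "sum U (range c) = 0" using \<open>(\<Sum>i\<in>UNIV. x i) = 0\<close> by (simp add: sum.reindex[OF assms(2)] Uc)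
    show "\<exists>v\<in>range c. U v \<noteq> 0" using \<open>x i \<noteq> 0\<close> Uc by auto
    show "(\<Sum>v\<in>range c. U v *\<^sub>R v) = 0" using x by (simp add: sum.reindex[OF assms(2)] Uc)
  qed
  then show False using assms(1) by simp
qed

lemma dual_basis_exists:
  fixes c :: "'n \<Rightarrow> real^'n"
  assumes indep: "\<And>x. (\<Sum>i\<in>UNIV. x i *\<^sub>R c i) = 0 \<Longrightarrow> x = (\<lambda>_. 0)"
  obtains f where "\<And>i j. f i \<bullet> c j = (if i = j then 1 else 0)" "\<And>g. g = (\<Sum>k\<in>UNIV. (g \<bullet> c k) *\<^sub>R f k)"
proof -
  define B :: "real^'n^'n" where "B = (\<chi> i j. c j $ i)"
  have "column i B = c i" for i unfolding B_def column_def by (simp add: vec_eq_iff)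
  then have "\<exists>X::real^'n^'n. X ** B = mat 1"
    unfolding matrix_left_invertible_independent_columns
    using indep by (simp add: scalar_mult_eq_scaleR) metis
  then obtain X :: "real^'n^'n" where XB: "X ** B = mat 1" by blast
  then have BX: "B ** X = mat 1" using matrix_left_right_inverse by blast
  show ?thesis
  proof
    show "X $ i \<bullet> c j = (if i = j then 1 else 0)" for i j
    proof -
      have "(X ** B) $ i $ j = X $ i \<bullet> c j" unfolding matrix_matrix_mult_def B_def inner_vec_def by simp
      then show ?thesis using XB by (simp add: mat_def)
    qed
    show "g = (\<Sum>k\<in>UNIV. (g \<bullet> c k) *\<^sub>R X $ k)" for g
    proof -
      have "g = (g v* B) v* X" using BX by (simp add: vector_matrix_mul_assoc)
      also have "\<dots> = (\<Sum>k\<in>UNIV. (g \<bullet> c k) *\<^sub>R X $ k)"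
        by (simp add: vec_eq_iff vector_matrix_mult_def B_def inner_vec_def mult.commute)
      finally show ?thesis .
    qed
  qed
qed

lemma simplicial_facet_frame:
  fixes P F :: "(real^'n) set"
  assumes "polytope P" "0 \<in> interior P" "simplicial_polytope P" "F facet_of P"
  obtains c :: "'n \<Rightarrow> real^'n" and u f
  where "F = convex hull (range c)" "\<not> affine_dependent (range c)"
    "u \<in> polar_dual P" "F = P \<inter> {y. u \<bullet> y = -1}" "\<And>j. u \<bullet> c j = -1"
    "\<And>i j. f i \<bullet> c j = (if i = j then 1 else 0)" "\<And>g. g = (\<Sum>k\<in>UNIV. (g \<bullet> c k) *\<^sub>R f k)"
proof -
  obtain C where C: "finite C" "\<not> affine_dependent C" "int (card C) = int CARD('n) - 1 + 1"
    "F = convex hull C"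
    using assms(3,4) unfolding simplicial_polytope_def simplex by blast
  then obtain c :: "'n \<Rightarrow> real^'n" where "bij_betw c UNIV C"
    using finite_same_card_bij[of "UNIV :: 'n set" C] by auto
  then have c: "range c = C" "inj c" by (simp_all add: bij_betw_def)
  obtain u where u: "u \<in> polar_dual P" "F = P \<inter> {y. u \<bullet> y = -1}"
    by (rule facet_of_polytope_normal[OF assms(1,2,4)])
  have "c j \<in> F" for j using C(4) c(1) hull_subset[of C convex] by blast
  then have uc: "u \<bullet> c j = -1" for j using u(2) by blast
  obtain f where "\<And>i j. f i \<bullet> c j = (if i = j then 1 else 0)" "\<And>g. g = (\<Sum>k\<in>UNIV. (g \<bullet> c k) *\<^sub>R f k)"
    using dual_basis_exists[OF independent_if_affine_independent_on_hyperplane[of c u]] C(2) c uc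
    by blast
  then show ?thesis using that C(2,4) c(1) u uc by blast
qed

lemma matrix_vector_mult_component_inner: "((A::real^'n^'m) *v x) $ i = A $ i \<bullet> x"
  by (simp add: matrix_vector_mult_def inner_vec_def mult.commute)

lemma det_Ints:
  fixes A :: "real^'n^'n"
  assumes "\<And>i j. A $ i $ j \<in> \<int>"
  shows "det A \<in> \<int>"
  unfolding det_def by (intro Ints_sum Ints_mult Ints_prod Ints_of_int assms)

lemma unimodular_if_rows_span_lattice:
  fixes U :: "real^'n^'n"
  assumes rows: "\<And>k. lattice_point (U $ k)"
    and span: "\<And>z. lattice_point z \<Longrightarrow> \<exists>\<gamma>. z = (\<Sum>k\<in>UNIV. of_int (\<gamma> k) *\<^sub>R U $ k)"
  shows "unimodular U"
proof -
  have "\<exists>\<gamma>. axis j 1 = (\<Sum>k\<in>UNIV. of_int (\<gamma> k) *\<^sub>R U $ k)" for j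
    by (rule span) (simp add: lattice_point_def axis_def)
  then obtain \<Gamma> where \<Gamma>: "\<And>j. axis j 1 = (\<Sum>k\<in>UNIV. of_int (\<Gamma> j k) *\<^sub>R U $ k)" by metis
  define V :: "real^'n^'n" where "V = (\<chi> j k. of_int (\<Gamma> j k))"
  have "(V ** U) $ j $ l = mat 1 $ j $ l" for j l
  proof -
    have "(V ** U) $ j $ l = (\<Sum>k\<in>UNIV. of_int (\<Gamma> j k) *\<^sub>R U $ k) $ l"
      unfolding V_def matrix_matrix_mult_def by simp
    also have "\<dots> = axis j 1 $ l" using \<Gamma> by metis
    finally show ?thesis by (simp add: mat_def axis_def)
  qed
  then have "det V * det U = 1" by (metis det_I det_mul vec_eq_iff)
  moreover have "det V \<in> \<int>" "det U \<in> \<int>"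
    using rows unfolding V_def lattice_point_def by (auto intro!: det_Ints)
  ultimately obtain a b where "a * b = 1" "det U = of_int b"
    by (elim Ints_cases) (metis of_int_eq_1_iff of_int_mult)
  then have "\<bar>det U\<bar> = 1" using abs_zmult_eq_1[of b a] by (simp add: mult.commute)
  then show ?thesis using rows unfolding unimodular_def lattice_point_def by blast
qed

section \<open>Raising a facet normal along the dual basis\<close>

text \<open>\<open>c\<close> lists the vertices of a facet \<open>F = P \<inter> {y. u \<bullet> y = -1}\<close>, and \<open>f\<close> is the dual basis
  of \<open>c\<close>, so that \<open>u = - (\<Sum>k. f k)\<close>.\<close>

locale facet_frame =
  fixes P :: "(real^'n) set" and c f :: "'n \<Rightarrow> real^'n" and u :: "real^'n"
  assumes reflexive: "reflexive_polytope P" and simplicial: "simplicial_polytope P"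
    and biorthogonal: "\<And>i j. f i \<bullet> c j = (if i = j then 1 else 0)"
    and expansion: "\<And>g. g = (\<Sum>k\<in>UNIV. (g \<bullet> c k) *\<^sub>R f k)"
    and c_vertex: "\<And>j. c j extreme_point_of P"
    and neg_c_vertex: "\<And>j. (- c j) extreme_point_of P"
    and u_dual: "u \<in> polar_dual P"
    and u_c: "\<And>j. u \<bullet> c j = -1"
    and u_tight: "\<And>y. y extreme_point_of P \<Longrightarrow> u \<bullet> y = -1 \<Longrightarrow> y \<in> range c"
begin

lemma polytope: "polytope P"
  using reflexive by (rule reflexive_polytope_imp_polytope)

lemma zero_in_interior: "0 \<in> interior P"
  using reflexive unfolding reflexive_polytope_def by blast

lemma vertex_lattice_point: "y extreme_point_of P \<Longrightarrow> lattice_point y"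
  using reflexive lattice_polytope_extreme_point unfolding reflexive_polytope_def by blast

lemma dual_vertex_lattice_point: "w extreme_point_of polar_dual P \<Longrightarrow> lattice_point w"
  using reflexive lattice_polytope_extreme_point unfolding reflexive_polytope_def by blast

lemma polar_dual_iff: "g \<in> polar_dual P \<longleftrightarrow> (\<forall>y. y extreme_point_of P \<longrightarrow> g \<bullet> y \<ge> -1)"
proof -
  have "polar_dual P = polar_dual (convex hull {v. v extreme_point_of P})"
    using polytope_vertices(2)[OF polytope] by (rule arg_cong)
  then show ?thesis by (simp add: polar_dual_convex_hull)
qed

lemma orthogonal_c_imp_zero: "(\<And>j. g \<bullet> c j = 0) \<Longrightarrow> g = 0"
  using expansion[of g] by simp

lemma u_lattice_point: "lattice_point u"
proof -
  have "u extreme_point_of polar_dual P"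
    using u_dual c_vertex u_c orthogonal_c_imp_zero
    by (intro extreme_point_of_polar_dual[of u P c]) (auto simp: extreme_point_of_def)
  then show ?thesis by (rule dual_vertex_lattice_point)
qed

lemma lattice_point_dual_coordinates:
  assumes "lattice_point z"
  obtains a where "z = (\<Sum>k\<in>UNIV. of_int (a k) *\<^sub>R f k)"
proof -
  have "\<forall>k. \<exists>m. z \<bullet> c k = of_int m"
    using lattice_point_inner_Ints[OF assms vertex_lattice_point[OF c_vertex]] by (auto elim: Ints_cases)
  then obtain a where a: "\<And>k. z \<bullet> c k = of_int (a k)" by metis
  have "z = (\<Sum>k\<in>UNIV. (z \<bullet> c k) *\<^sub>R f k)" by (rule expansion)
  also have "\<dots> = (\<Sum>k\<in>UNIV. of_int (a k) *\<^sub>R f k)" by (simp add: a)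
  finally show ?thesis by (rule that)
qed

text \<open>The ray \<open>u + t f i\<close> leaves the polar dual when it first becomes tight on a vertex \<open>y\<close>
  with \<open>f i \<bullet> y < 0\<close>, which happens at \<open>t = exit_ratio i y\<close>; the vertex \<open>-c i\<close> is tight at
  \<open>t = 2\<close>.\<close>

definition exit_ratio where
  "exit_ratio i y = (1 + u \<bullet> y) / - (f i \<bullet> y)"

definition exit_time where
  "exit_time i = Min (exit_ratio i ` {y. y extreme_point_of P \<and> f i \<bullet> y < 0})"

lemma exit_time_le:
  assumes "y extreme_point_of P" "f i \<bullet> y < 0"
  shows "exit_time i \<le> exit_ratio i y"
  unfolding exit_time_def using assms polytope_vertices(1)[OF polytope] by (intro Min_le) auto

lemma exit_time_attained:
  obtains y where "y extreme_point_of P" "f i \<bullet> y < 0" "exit_ratio i y = exit_time i"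
proof -
  have "- c i \<in> {y. y extreme_point_of P \<and> f i \<bullet> y < 0}" using neg_c_vertex biorthogonal by simp
  then have "exit_time i \<in> exit_ratio i ` {y. y extreme_point_of P \<and> f i \<bullet> y < 0}"
    unfolding exit_time_def using polytope_vertices(1)[OF polytope] by (intro Min_in) auto
  then show ?thesis using that by auto
qed

lemma exit_ratio_pos:
  assumes y: "y extreme_point_of P" "f i \<bullet> y < 0"
  shows "exit_ratio i y > 0"
proof -
  have "y \<notin> range c" using y(2) biorthogonal by (auto split: if_splits)
  then have "u \<bullet> y \<noteq> -1" using u_tight y(1) by blast
  moreover have "u \<bullet> y \<ge> -1" using u_dual y(1) unfolding polar_dual_iff by blast
  ultimately show ?thesis using y(2) unfolding exit_ratio_def by (simp add: divide_pos_neg)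
qed

lemma exit_time_bounds: "0 < exit_time i" "exit_time i \<le> 2"
proof -
  obtain y where "y extreme_point_of P" "f i \<bullet> y < 0" "exit_ratio i y = exit_time i"
    by (rule exit_time_attained)
  then show "0 < exit_time i" using exit_ratio_pos by metis
  have "f i \<bullet> - c i < 0" using biorthogonal by simp
  moreover have "exit_ratio i (- c i) = 2" unfolding exit_ratio_def using u_c biorthogonal by simp
  ultimately show "exit_time i \<le> 2" using exit_time_le[OF neg_c_vertex] by metis
qed

lemma exit_point_polar_dual: "u + exit_time i *\<^sub>R f i \<in> polar_dual P"
  unfolding polar_dual_iff
proof (intro allI impI)
  fix z assume z: "z extreme_point_of P"
  show "(u + exit_time i *\<^sub>R f i) \<bullet> z \<ge> -1"
  proof (cases "f i \<bullet> z < 0")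
    case True
    then have "exit_time i \<le> (1 + u \<bullet> z) / - (f i \<bullet> z)"
      using exit_time_le[OF z] unfolding exit_ratio_def by blast
    moreover have "- (f i \<bullet> z) > 0" using True by simp
    ultimately have "exit_time i * - (f i \<bullet> z) \<le> 1 + u \<bullet> z" using pos_le_divide_eq by blast
    then show ?thesis by (simp add: inner_add_left)
  next
    case False
    then have "exit_time i * (f i \<bullet> z) \<ge> 0" using exit_time_bounds(1)[of i] by simp
    moreover have "u \<bullet> z \<ge> -1" using u_dual z unfolding polar_dual_iff by blast
    ultimately show ?thesis by (simp add: inner_add_left)
  qed
qed

lemma exit_point_tight:
  obtains y where "y extreme_point_of P" "f i \<bullet> y < 0" "(u + exit_time i *\<^sub>R f i) \<bullet> y = -1"
proof -
  obtain y where y: "y extreme_point_of P" "f i \<bullet> y < 0" "exit_ratio i y = exit_time i"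
    by (rule exit_time_attained)
  then have "exit_time i * - (f i \<bullet> y) = 1 + u \<bullet> y"
    unfolding y(3)[symmetric] exit_ratio_def by simp
  then have "(u + exit_time i *\<^sub>R f i) \<bullet> y = -1" by (simp add: inner_add_left)
  then show ?thesis using that y(1,2) by blast
qed

lemma exit_point_extreme_point_of_polar_dual:
  "u + exit_time i *\<^sub>R f i extreme_point_of polar_dual P"
proof -
  obtain y where y: "y extreme_point_of P" "f i \<bullet> y < 0" "(u + exit_time i *\<^sub>R f i) \<bullet> y = -1"
    by (rule exit_point_tight)
  define s where "s j = (if j = i then y else c j)" for j
  show ?thesis
  proof (rule extreme_point_of_polar_dual[OF exit_point_polar_dual])
    show "s j \<in> P" for j
      using y(1) c_vertex unfolding s_def extreme_point_of_def by simp
    show "(u + exit_time i *\<^sub>R f i) \<bullet> s j = -1" for j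
      using y(3) u_c biorthogonal by (simp add: s_def inner_add_left)
    show "g = 0" if g: "\<And>j. g \<bullet> s j = 0" for g
    proof -
      have gc: "g \<bullet> c k = 0" if "k \<noteq> i" for k using g[of k] that by (simp add: s_def)
      have "g = (\<Sum>k\<in>UNIV. (g \<bullet> c k) *\<^sub>R f k)" by (rule expansion)
      also have "\<dots> = (\<Sum>k\<in>UNIV. if k = i then (g \<bullet> c i) *\<^sub>R f i else 0)"
        by (rule sum.cong) (auto simp: gc)
      also have "\<dots> = (g \<bullet> c i) *\<^sub>R f i" by simp
      finally have gi: "g = (g \<bullet> c i) *\<^sub>R f i" .
      have "(g \<bullet> c i) * (f i \<bullet> y) = 0" using g[of i] by (subst (asm) gi) (simp add: s_def)
      then have "g \<bullet> c i = 0" using y(2) by simp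
      then show "g = 0" using gi by simp
    qed
  qed
qed

lemma exit_time_lattice_point: "lattice_point (exit_time i *\<^sub>R f i)"
proof -
  have "lattice_point (u + exit_time i *\<^sub>R f i)"
    by (rule dual_vertex_lattice_point[OF exit_point_extreme_point_of_polar_dual])
  then show ?thesis using lattice_point_diff[OF _ u_lattice_point] by fastforce
qed

text \<open>Evaluated at \<open>c i\<close>, the lattice vector \<open>exit_time i *\<^sub>R f i\<close> gives the exit time itself.\<close>

lemma exit_time_cases: "exit_time i = 1 \<or> exit_time i = 2"
proof -
  have "(exit_time i *\<^sub>R f i) \<bullet> c i \<in> \<int>"
    by (rule lattice_point_inner_Ints[OF exit_time_lattice_point vertex_lattice_point[OF c_vertex]])
  then have "exit_time i \<in> \<int>" using biorthogonal[of i i] by simp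
  then obtain m where "exit_time i = of_int m" by (auto elim: Ints_cases)
  then show ?thesis using exit_time_bounds[of i] by auto
qed

lemma double_step_tight_vertex:
  assumes "u + 2 *\<^sub>R f i \<in> polar_dual P" "q extreme_point_of P" "(u + 2 *\<^sub>R f i) \<bullet> q = -1"
  shows "q \<in> range c \<or> q = - c i"
proof -
  define s where "s j = (if j = i then - c i else c j)" for j
  define h where "h j = (if j = i then - f i else f j)" for j
  have hs: "h a \<bullet> s b = (if a = b then 1 else 0)" for a b
    using biorthogonal by (simp add: s_def h_def)
  have "q \<in> range s"
  proof (rule simplicial_tight_vertex[OF polytope zero_in_interior simplicial assms(1) _ _ _ assms(2,3)])
    show "\<forall>x\<in>range s. x extreme_point_of P \<and> (u + 2 *\<^sub>R f i) \<bullet> x = -1"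
      using c_vertex neg_c_vertex u_c biorthogonal by (auto simp: s_def inner_add_left)
    show "\<not> affine_dependent (range s)" using biorthogonal_affine_independent(1)[OF hs] .
    show "card (range s) = CARD('n)"
      using biorthogonal_affine_independent(2)[OF hs] by (simp add: card_image)
  qed
  then show ?thesis by (auto simp: s_def)
qed

end

section \<open>Pseudo-symmetric simplicial reflexive polytopes\<close>

text \<open>Here \<open>-F\<close> is a facet too, with normal \<open>-u\<close>; the frame of \<open>-F\<close> is the negated one.\<close>

locale pseudo_symmetric_frame = facet_frame +
  assumes neg_u_dual: "- u \<in> polar_dual P"
    and neg_u_tight: "\<And>y. y extreme_point_of P \<Longrightarrow> - u \<bullet> y = -1 \<Longrightarrow> y \<in> range (\<lambda>j. - c j)"

sublocale pseudo_symmetric_frame \<subseteq> neg: facet_frame P "\<lambda>j. - c j" "\<lambda>i. - f i" "- u"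
proof unfold_locales
  fix g
  have "(\<Sum>k\<in>UNIV. (g \<bullet> - c k) *\<^sub>R - f k) = (\<Sum>k\<in>UNIV. (g \<bullet> c k) *\<^sub>R f k)" by simp
  then show "g = (\<Sum>k\<in>UNIV. (g \<bullet> - c k) *\<^sub>R - f k)" using expansion[of g] by metis
qed (use reflexive simplicial biorthogonal c_vertex neg_c_vertex neg_u_dual u_c neg_u_tight in auto)

context pseudo_symmetric_frame
begin

lemma u_inner_other_vertex:
  assumes q: "q extreme_point_of P" "q \<notin> range c" "q \<notin> range (\<lambda>j. - c j)"
  shows "u \<bullet> q = 0"
proof -
  have "u \<bullet> q \<in> \<int>" using lattice_point_inner_Ints[OF u_lattice_point vertex_lattice_point[OF q(1)]] .
  then obtain m where m: "u \<bullet> q = of_int m" by (auto elim: Ints_cases)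
  have "u \<bullet> q \<ge> -1" "- u \<bullet> q \<ge> -1"
    using u_dual neg_u_dual q(1) unfolding polar_dual_iff by blast+
  moreover have "u \<bullet> q \<noteq> -1" "- u \<bullet> q \<noteq> -1" using u_tight neg_u_tight q by blast+
  ultimately show ?thesis using m by auto
qed

lemma other_vertex_dual_coordinate_bound:
  assumes q: "q extreme_point_of P" "q \<notin> range c" "q \<notin> range (\<lambda>j. - c j)"
  shows "\<bar>f k \<bullet> q\<bar> \<le> 1"
proof -
  have "(u + exit_time k *\<^sub>R f k) \<bullet> q \<ge> -1" "(- u + neg.exit_time k *\<^sub>R - f k) \<bullet> q \<ge> -1"
    using exit_point_polar_dual neg.exit_point_polar_dual q(1) unfolding polar_dual_iff by blast+
  then have "exit_time k * (f k \<bullet> q) \<ge> -1" "neg.exit_time k * (f k \<bullet> q) \<le> 1"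
    using u_inner_other_vertex[OF q] by (simp_all add: inner_add_left inner_diff_left)
  then show ?thesis using exit_time_cases[of k] neg.exit_time_cases[of k] by auto
qed

definition nonlattice_directions where
  "nonlattice_directions = {k. \<not> lattice_point (f k)}"

lemma nonlattice_exit_time:
  assumes "k \<in> nonlattice_directions"
  shows "exit_time k = 2" "neg.exit_time k = 2"
proof -
  have "exit_time k \<noteq> 1" "neg.exit_time k \<noteq> 1"
    using exit_time_lattice_point[of k] neg.exit_time_lattice_point[of k] assms lattice_point_uminus
    unfolding nonlattice_directions_def by force+
  then show "exit_time k = 2" "neg.exit_time k = 2"
    using exit_time_cases[of k] neg.exit_time_cases[of k] by blast+
qed

lemma nonlattice_double_lattice_point:
  assumes "k \<in> nonlattice_directions"
  shows "lattice_point (2 *\<^sub>R f k)"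
  using exit_time_lattice_point[of k] nonlattice_exit_time(1)[OF assms] by simp

text \<open>Both rays, from \<open>u\<close> and from \<open>-u\<close>, exit at time \<open>2\<close>, where only \<open>\<plusminus>c\<close> are tight; this
  squeezes the integer \<open>2 (f k \<bullet> q)\<close> strictly between \<open>-1\<close> and \<open>1\<close>.\<close>

lemma nonlattice_direction_other_vertex:
  assumes k: "k \<in> nonlattice_directions"
    and q: "q extreme_point_of P" "q \<notin> range c" "q \<notin> range (\<lambda>j. - c j)"
  shows "f k \<bullet> q = 0"
proof -
  have dual: "u + 2 *\<^sub>R f k \<in> polar_dual P" "- u + 2 *\<^sub>R - f k \<in> polar_dual P"
    using exit_point_polar_dual[of k] neg.exit_point_polar_dual[of k] nonlattice_exit_time[OF k]
    by simp_all
  have "(u + 2 *\<^sub>R f k) \<bullet> q \<ge> -1" "(- u + 2 *\<^sub>R - f k) \<bullet> q \<ge> -1"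
    using dual q(1) unfolding polar_dual_iff by blast+
  moreover have "(u + 2 *\<^sub>R f k) \<bullet> q \<noteq> -1" "(- u + 2 *\<^sub>R - f k) \<bullet> q \<noteq> -1"
    using double_step_tight_vertex[OF dual(1) q(1)] neg.double_step_tight_vertex[OF dual(2) q(1)] q(2,3)
    by auto
  ultimately have "2 * (f k \<bullet> q) > -1" "2 * (f k \<bullet> q) < 1"
    using u_inner_other_vertex[OF q] by (simp_all add: inner_add_left inner_diff_left)
  moreover have "(2 *\<^sub>R f k) \<bullet> q \<in> \<int>"
    by (rule lattice_point_inner_Ints[OF nonlattice_double_lattice_point[OF k] vertex_lattice_point[OF q(1)]])
  then obtain m where m: "2 * (f k \<bullet> q) = of_int m" by (auto elim: Ints_cases)
  ultimately have "real_of_int (-1) < of_int m" "of_int m < real_of_int 1" by simp_all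
  then have "m = 0" unfolding of_int_less_iff by simp
  then show ?thesis using m by simp
qed

lemma other_vertex_dual_coordinate:
  assumes q: "q extreme_point_of P" "q \<notin> range c" "q \<notin> range (\<lambda>j. - c j)"
  shows "f k \<bullet> q \<in> {-1, 0, 1}"
proof (cases "k \<in> nonlattice_directions")
  case True
  then show ?thesis using nonlattice_direction_other_vertex q by simp
next
  case False
  then have "f k \<bullet> q \<in> \<int>"
    using lattice_point_inner_Ints vertex_lattice_point[OF q(1)] unfolding nonlattice_directions_def by blast
  then obtain m where "f k \<bullet> q = of_int m" by (auto elim: Ints_cases)
  then show ?thesis using other_vertex_dual_coordinate_bound[OF q, of k] by auto
qed

text \<open>Integer coefficients on the non-lattice directions that combine the \<open>f b\<close> to a lattice
  point; modulo \<open>2\<close> they form a binary code describing the lattice relative to the span of the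
  lattice vectors among the \<open>f k\<close> and the \<open>2 f k\<close>.\<close>

definition lattice_relations where
  "lattice_relations = {h. (\<forall>j. j \<notin> nonlattice_directions \<longrightarrow> h j = 0) \<and>
     lattice_point (\<Sum>b\<in>nonlattice_directions. of_int (h b) *\<^sub>R f b)}"

lemma int_submodule_lattice_relations: "int_submodule lattice_relations"
proof -
  have "(\<Sum>b\<in>nonlattice_directions. of_int (m * h b) *\<^sub>R f b) =
      of_int m *\<^sub>R (\<Sum>b\<in>nonlattice_directions. of_int (h b) *\<^sub>R f b)" for m h
    by (simp add: scaleR_sum_right)
  then show ?thesis
    unfolding int_submodule_def lattice_relations_def
    by (auto simp: scaleR_add_left sum.distrib intro!: lattice_point_add lattice_point_scaleR_of_int)
qed

lemma double_unit_lattice_relations: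
  assumes "k \<in> nonlattice_directions"
  shows "double_unit k \<in> lattice_relations"
proof -
  have "(\<Sum>b\<in>nonlattice_directions. of_int (double_unit k b) *\<^sub>R f b) =
      (\<Sum>b\<in>nonlattice_directions. if b = k then 2 *\<^sub>R f b else 0)"
    by (rule sum.cong) (auto simp: double_unit_def)
  also have "\<dots> = 2 *\<^sub>R f k" using assms by simp
  finally have "(\<Sum>b\<in>nonlattice_directions. of_int (double_unit k b) *\<^sub>R f b) = 2 *\<^sub>R f k" .
  then show ?thesis
    using assms nonlattice_double_lattice_point[OF assms]
    unfolding lattice_relations_def double_unit_def by auto
qed

text \<open>Since \<open>u = - (\<Sum>k. f k)\<close> is a lattice point, the all-ones vector is a relation; so no
  coordinate is even on all relations.\<close>

lemma ones_lattice_relations: "(\<lambda>j. if j \<in> nonlattice_directions then 1 else 0) \<in> lattice_relations"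
proof -
  have "u = (\<Sum>k\<in>UNIV. (u \<bullet> c k) *\<^sub>R f k)" by (rule expansion)
  then have "- u = (\<Sum>k\<in>UNIV - nonlattice_directions. f k) + (\<Sum>k\<in>nonlattice_directions. f k)"
    by (simp add: u_c sum_negf sum.subset_diff[of nonlattice_directions UNIV])
  moreover have "lattice_point (\<Sum>k\<in>UNIV - nonlattice_directions. f k)"
    by (rule lattice_point_sum) (simp add: nonlattice_directions_def)
  ultimately have "lattice_point (\<Sum>k\<in>nonlattice_directions. f k)"
    using lattice_point_diff[OF lattice_point_uminus[THEN iffD2, OF u_lattice_point]]
    by (metis add_diff_cancel_left')
  then show ?thesis unfolding lattice_relations_def by (simp cong: sum.cong)
qed

definition sign_matrix where
  "sign_matrix r = (\<chi> k. if k \<in> nonlattice_directions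
     then (\<Sum>b\<in>nonlattice_directions. of_int (r k b) *\<^sub>R f b) else f k)"

lemma sign_matrix_lattice_point:
  assumes "\<forall>k\<in>nonlattice_directions. r k \<in> lattice_relations"
  shows "lattice_point (sign_matrix r $ k)"
  using assms unfolding sign_matrix_def lattice_relations_def nonlattice_directions_def by auto

lemma sign_matrix_vertex:
  assumes r: "\<forall>k\<in>nonlattice_directions. r k \<in> lattice_relations \<and> (\<forall>j. r k j \<in> {-1, 0, 1})"
    and v: "v extreme_point_of P"
  shows "(sign_matrix r *v v) $ i \<in> {-1, 0, 1}"
proof -
  let ?N = nonlattice_directions
  have row: "(sign_matrix r *v v) $ i =
      (if i \<in> ?N then (\<Sum>b\<in>?N. of_int (r i b) * (f b \<bullet> v)) else f i \<bullet> v)"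
    unfolding matrix_vector_mult_component_inner sign_matrix_def by (simp add: inner_sum_left)
  have at_c: "(\<Sum>b\<in>?N. of_int (r i b) * (f b \<bullet> c j)) \<in> {-1, 0, 1 :: real}" if "i \<in> ?N" for j
  proof -
    have "(\<Sum>b\<in>?N. of_int (r i b) * (f b \<bullet> c j)) = (\<Sum>b\<in>?N. if b = j then of_int (r i b) else 0)"
      by (rule sum.cong) (simp_all add: biorthogonal)
    also have "\<dots> = (if j \<in> ?N then of_int (r i j) else 0)" by simp
    finally have sum_eq: "(\<Sum>b\<in>?N. of_int (r i b) * (f b \<bullet> c j)) = (if j \<in> ?N then of_int (r i j) else 0)" .
    have "r i j \<in> {-1, 0, 1}" using r that by blast
    then show ?thesis using sum_eq by auto
  qed
  consider j where "v = c j" | j where "v = - c j" | "v \<notin> range c" "v \<notin> range (\<lambda>j. - c j)"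
    by blast
  then show ?thesis
  proof cases
    case 1
    then show ?thesis using row at_c biorthogonal by auto
  next
    case 2
    then have "(sign_matrix r *v v) $ i =
        - (if i \<in> ?N then (\<Sum>b\<in>?N. of_int (r i b) * (f b \<bullet> c j)) else f i \<bullet> c j)"
      using row by (simp add: sum_negf)
    then show ?thesis using at_c biorthogonal by auto
  next
    case 3
    then show ?thesis
      using row nonlattice_direction_other_vertex[OF _ v] other_vertex_dual_coordinate[OF v] by simp
  qed
qed

lemma sign_matrix_span:
  assumes r: "\<forall>k\<in>nonlattice_directions. r k \<in> lattice_relations"
    "lattice_relations \<subseteq> int_span r nonlattice_directions"
    and z: "lattice_point z"
  shows "\<exists>\<gamma>. z = (\<Sum>k\<in>UNIV. of_int (\<gamma> k) *\<^sub>R sign_matrix r $ k)"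
proof -
  let ?N = nonlattice_directions
  note split = sum.subset_diff[OF subset_UNIV[of ?N] finite_class.finite_UNIV]
  obtain a where "z = (\<Sum>k\<in>UNIV. of_int (a k) *\<^sub>R f k)" by (rule lattice_point_dual_coordinates[OF z])
  then have z_split: "z = (\<Sum>k\<in>UNIV - ?N. of_int (a k) *\<^sub>R f k) + (\<Sum>k\<in>?N. of_int (a k) *\<^sub>R f k)"
    using split by metis
  define h where "h b = (if b \<in> ?N then a b else 0)" for b
  have h_sum: "(\<Sum>b\<in>?N. of_int (h b) *\<^sub>R f b) = (\<Sum>k\<in>?N. of_int (a k) *\<^sub>R f k)"
    unfolding h_def by simp
  have "lattice_point (\<Sum>k\<in>UNIV - ?N. of_int (a k) *\<^sub>R f k)"
    by (intro lattice_point_sum lattice_point_scaleR_of_int) (simp add: nonlattice_directions_def)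
  then have "lattice_point (\<Sum>b\<in>?N. of_int (h b) *\<^sub>R f b)"
    using lattice_point_diff[OF z] z_split h_sum by (metis add_diff_cancel_left')
  then have "h \<in> lattice_relations" unfolding lattice_relations_def h_def by simp
  then obtain \<beta> where \<beta>: "h = (\<lambda>j. \<Sum>k\<in>?N. \<beta> k * r k j)" using r(2) unfolding int_span_def by blast
  have "(\<Sum>k\<in>?N. of_int (\<beta> k) *\<^sub>R sign_matrix r $ k) = (\<Sum>k\<in>?N. \<Sum>b\<in>?N. of_int (\<beta> k * r k b) *\<^sub>R f b)"
    unfolding sign_matrix_def by (simp add: scaleR_sum_right)
  also have "\<dots> = (\<Sum>b\<in>?N. \<Sum>k\<in>?N. of_int (\<beta> k * r k b) *\<^sub>R f b)" by (rule sum.swap)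
  also have "\<dots> = (\<Sum>b\<in>?N. of_int (h b) *\<^sub>R f b)" unfolding \<beta> by (simp add: scaleR_sum_left)
  finally have N_part: "(\<Sum>k\<in>?N. of_int (\<beta> k) *\<^sub>R sign_matrix r $ k) = (\<Sum>k\<in>?N. of_int (a k) *\<^sub>R f k)"
    using h_sum by simp
  define \<gamma> where "\<gamma> k = (if k \<in> ?N then \<beta> k else a k)" for k
  have "(\<Sum>k\<in>UNIV - ?N. of_int (\<gamma> k) *\<^sub>R sign_matrix r $ k) = (\<Sum>k\<in>UNIV - ?N. of_int (a k) *\<^sub>R f k)"
    unfolding \<gamma>_def sign_matrix_def by simp
  moreover have "(\<Sum>k\<in>?N. of_int (\<gamma> k) *\<^sub>R sign_matrix r $ k) = (\<Sum>k\<in>?N. of_int (a k) *\<^sub>R f k)"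
    using N_part unfolding \<gamma>_def by simp
  ultimately have "z = (\<Sum>k\<in>UNIV. of_int (\<gamma> k) *\<^sub>R sign_matrix r $ k)"
    using z_split split by metis
  then show ?thesis by blast
qed

theorem unimodular_sign_transform:
  "\<exists>U. unimodular U \<and> (\<forall>v. v extreme_point_of P \<longrightarrow> (\<forall>i. (U *v v) $ i \<in> {-1, 0, 1}))"
proof -
  let ?N = nonlattice_directions
  have odd: "\<forall>k\<in>?N. \<exists>g\<in>lattice_relations. odd (g k)"
    using ones_lattice_relations by (intro ballI bexI) simp_all
  have supp: "\<forall>g\<in>lattice_relations. \<forall>j. j \<notin> ?N \<longrightarrow> g j = 0"
    unfolding lattice_relations_def by blast
  have du: "\<forall>k\<in>?N. double_unit k \<in> lattice_relations"
    using double_unit_lattice_relations by blast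
  obtain r where r: "\<forall>k\<in>?N. r k \<in> lattice_relations \<and> (\<forall>j. r k j \<in> {-1, 0, 1})"
    "lattice_relations \<subseteq> int_span r ?N"
    by (rule int_submodule_sign_vector_generators[OF _ int_submodule_lattice_relations supp du odd]) simp
  have rel: "\<forall>k\<in>?N. r k \<in> lattice_relations" using r(1) by blast
  have "unimodular (sign_matrix r)"
  proof (rule unimodular_if_rows_span_lattice)
    show "lattice_point (sign_matrix r $ k)" for k by (rule sign_matrix_lattice_point[OF rel])
    show "\<exists>\<gamma>. z = (\<Sum>k\<in>UNIV. of_int (\<gamma> k) *\<^sub>R sign_matrix r $ k)" if "lattice_point z" for z
      by (rule sign_matrix_span[OF rel r(2) that])
  qed
  moreover have "\<forall>v. v extreme_point_of P \<longrightarrow> (\<forall>i. (sign_matrix r *v v) $ i \<in> {-1, 0, 1})"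
    using sign_matrix_vertex[OF r(1)] by simp
  ultimately show ?thesis by (intro exI[of _ "sign_matrix r"] conjI)
qed

end

lemma pseudo_symmetric_frame_exists:
  fixes P :: "(real^'n) set"
  assumes refl: "reflexive_polytope P" and simp: "simplicial_polytope P" and "pseudo_symmetric P"
  obtains c f u where "pseudo_symmetric_frame P c f u"
proof -
  have poly: "polytope P" by (rule reflexive_polytope_imp_polytope[OF refl])
  have zero_int: "0 \<in> interior P" using refl unfolding reflexive_polytope_def by blast
  obtain F where F: "F facet_of P" "uminus ` F facet_of P"
    using assms(3) unfolding pseudo_symmetric_def by blast
  obtain c :: "'n \<Rightarrow> real^'n" and u f
    where c: "F = convex hull (range c)" "\<not> affine_dependent (range c)"
      and u: "u \<in> polar_dual P" "F = P \<inter> {y. u \<bullet> y = -1}" and uc: "\<And>j. u \<bullet> c j = -1"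
      and biorth: "\<And>i j. f i \<bullet> c j = (if i = j then 1 else 0)"
      and expansion: "\<And>g. g = (\<Sum>k\<in>UNIV. (g \<bullet> c k) *\<^sub>R f k)"
    by (rule simplicial_facet_frame[OF poly zero_int simp F(1)]) (rule that)
  obtain u' where u': "u' \<in> polar_dual P" "uminus ` F = P \<inter> {y. u' \<bullet> y = -1}"
    by (rule facet_of_polytope_normal[OF poly zero_int F(2)])
  have "(u' + u) \<bullet> c j = 0" for j
  proof -
    have "- c j \<in> uminus ` F" using c(1) hull_subset[of "range c" convex] by blast
    then have "u' \<bullet> - c j = -1" using u'(2) by blast
    then show ?thesis using uc[of j] by (simp add: inner_add_left)
  qed
  then have "u' + u = 0" using expansion[of "u' + u"] by simp
  then have u'_eq: "u' = - u" by (simp add: add_eq_0_iff)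
  have negF: "uminus ` F = convex hull (range (\<lambda>j. - c j))"
    using convex_hull_linear_image[of uminus "range c"] c(1) by (simp add: image_image linear_uminus)
  have neg_indep: "\<not> affine_dependent (range (\<lambda>j. - c j))"
    using biorthogonal_affine_independent(1)[of "\<lambda>i. - f i" "\<lambda>j. - c j"] biorth by simp
  have face: "F face_of P" "uminus ` F face_of P" using F by (simp_all add: facet_of_imp_face_of)
  show ?thesis
  proof (rule that, unfold_locales)
    show "reflexive_polytope P" "simplicial_polytope P" by (fact refl simp)+
    show "f i \<bullet> c j = (if i = j then 1 else 0)" for i j by (rule biorth)
    show "g = (\<Sum>k\<in>UNIV. (g \<bullet> c k) *\<^sub>R f k)" for g by (rule expansion)
    show "u \<in> polar_dual P" "- u \<in> polar_dual P" "u \<bullet> c j = -1" for j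
      using u(1) u'(1) uc u'_eq by simp_all
    show "c j extreme_point_of P" for j by (rule extreme_point_of_face_simplex[OF face(1) c(1,2)]) simp
    show "- c j extreme_point_of P" for j
      by (rule extreme_point_of_face_simplex[OF face(2) negF neg_indep]) simp
    show "y \<in> range c" if "y extreme_point_of P" "u \<bullet> y = -1" for y
      using extreme_point_of_face_convex_hull[OF face(1) c(1) that(1)] that u(2)
      unfolding extreme_point_of_def by blast
    show "y \<in> range (\<lambda>j. - c j)" if "y extreme_point_of P" "- u \<bullet> y = -1" for y
      using extreme_point_of_face_convex_hull[OF face(2) negF that(1)] that u'(2) u'_eq
      unfolding extreme_point_of_def by blast
  qed
qed

theorem corollary4p8:
  fixes P :: "(real^'n) set"
  assumes "reflexive_polytope P" and "simplicial_polytope P" and "pseudo_symmetric P"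
  shows "\<exists>U::real^'n^'n. unimodular U \<and>
           (\<forall>v. v extreme_point_of P \<longrightarrow> (\<forall>i. (U *v v) $ i \<in> {-1, 0, 1}))"
proof -
  obtain c f u where "pseudo_symmetric_frame P c f u"
    by (rule pseudo_symmetric_frame_exists[OF assms])
  then show ?thesis by (rule pseudo_symmetric_frame.unimodular_sign_transform)
qed

end
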